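(* Let $(M,d)$ be a metric space, $\mathsf{P}\subseteq M$ a set of $n$ points, and $1\le\ell\le k\le n$ integers; put $m=\lfloor k/\ell\rfloor$. Let $Q=\{q_1,\dots,q_m\}$ be the output of Gonzalez's algorithm on $\mathsf{P}$ with $m$ centers, and let $C\subseteq\mathsf{P}$ be any set with $|C|=k$ and $C\supseteq\bigcup_{i=1}^m N_{\mathsf{P}}(q_i,\ell)$. Let $r_{\mathrm{opt}}=\min_{C'\subseteq\mathsf{P},|C'|=k}\max_{p\in\mathsf{P}} d_{C'}(p,\ell)$. Then $\max_{p\in\mathsf{P}} d_C(p,\ell)\le 4\,r_{\mathrm{opt}}$, and if moreover $\ell\mid k$ then $\max_{p\in\mathsf{P}} d_C(p,\ell)\le 3\,r_{\mathrm{opt}}$.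
   Context: Gonzalez's algorithm with $m$ centers: $q_1\in\mathsf{P}$ is arbitrary, and for $i=2,\dots,m$, $q_i$ is a point of $\mathsf{P}$ maximizing $d(p,\{q_1,\dots,q_{i-1}\})$ over $p\in\mathsf{P}$. For a finite $S\subseteq M$ and $1\le i\le|S|$, $d_S(p,i)$ is the radius of the smallest closed ball centered at $p$ containing at least $i$ points of $S$; nearest neighbors are ordered lexicographically by $(d(p,s),\text{index of }s)$ (points of $\mathsf{P}=\{p_1,\dots,p_n\}$ are indexed) and $N_S(p,i)$ is the set of the first $i$ points of $S$ in this order, $|N_S(p,i)|=i$. The quantity $\max_{p\in\mathsf{P}} d_C(p,\ell)$ is the fault-tolerant $k$-center cost of $C$. *)

theory Defs
  imports "HOL-Analysis.Analysis"
begin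

definition dist_set :: "'a::metric_space \<Rightarrow> 'a set \<Rightarrow> real" where
  "dist_set x S = Min (dist x ` S)"

definition gonzalez :: "'a::metric_space set \<Rightarrow> nat \<Rightarrow> (nat \<Rightarrow> 'a) \<Rightarrow> bool" where
  "gonzalez P m q \<longleftrightarrow>
     (\<forall>i\<in>{1..m}. q i \<in> P) \<and>
     (\<forall>i\<in>{2..m}. \<forall>p\<in>P. dist_set p (q ` {1..<i}) \<le> dist_set (q i) (q ` {1..<i}))"

definition kdist :: "'a::metric_space set \<Rightarrow> 'a \<Rightarrow> nat \<Rightarrow> real" where
  "kdist S p i = Inf {r::real. 0 \<le> r \<and> i \<le> card (S \<inter> cball p r)}"

(* N_S(p,i): first i points of S in the lexicographic order by (d(p,s), index s),
   where ix gives the index of a point *)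
definition nn_set :: "('a \<Rightarrow> nat) \<Rightarrow> 'a::metric_space set \<Rightarrow> 'a \<Rightarrow> nat \<Rightarrow> 'a set" where
  "nn_set ix S p i = {s \<in> S. card {t \<in> S. dist p t < dist p s \<or> (dist p t = dist p s \<and> ix t < ix s)} < i}"

definition ft_cost :: "'a::metric_space set \<Rightarrow> 'a set \<Rightarrow> nat \<Rightarrow> real" where
  "ft_cost P C l = Max ((\<lambda>p. kdist C p l) ` P)"

definition r_opt :: "'a::metric_space set \<Rightarrow> nat \<Rightarrow> nat \<Rightarrow> real" where
  "r_opt P k l = Min {ft_cost P C' l | C'. C' \<subseteq> P \<and> card C' = k}"

end

theory Submission
  imports Defs
begin

text \<open>
  Let \<open>C\<^sub>*\<close> be an optimal solution of cost \<open>r\<close>, so every point of \<open>P\<close> has \<open>\<ell>\<close> points of \<open>C\<^sub>*\<close>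
  within distance \<open>r\<close>. If some \<open>p \<in> P\<close> were farther than \<open>2r\<close> from all Gonzalez centers, then by the
  farthest-point rule \<open>p, q\<^sub>1, \<dots>, q\<^sub>m\<close> would be pairwise more than \<open>2r\<close> apart; their \<open>r\<close>-balls
  would then contain \<open>(m + 1) \<ell> > k\<close> distinct points of \<open>C\<^sub>*\<close>. Hence every \<open>p\<close> is within \<open>2r\<close> of
  some \<open>q\<^sub>i\<close>, whose \<open>\<ell>\<close> nearest neighbours lie in \<open>C\<close> and within \<open>r\<close> of \<open>q\<^sub>i\<close>, giving
  \<open>d\<^sub>C(p, \<ell>) \<le> 3r\<close>. This bound holds whether or not \<open>\<ell>\<close> divides \<open>k\<close>.
\<close>

lemma kdist_le:
  assumes "0 \<le> r" "i \<le> card (S \<inter> cball p r)"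
  shows "kdist S p i \<le> r"
  unfolding kdist_def
  by (rule cInf_lower) (use assms in \<open>auto intro: bdd_belowI[of _ 0]\<close>)

lemma kdist_attained:
  fixes S :: "'a::metric_space set"
  assumes fin: "finite S" and iS: "i \<le> card S"
  shows "0 \<le> kdist S p i \<and> i \<le> card (S \<inter> cball p (kdist S p i))"
proof -
  define K where "K = {r::real. 0 \<le> r \<and> i \<le> card (S \<inter> cball p r)}"
  define D where "D = insert 0 (dist p ` S)"
  have finD: "finite D" using fin by (simp add: D_def)
  text \<open>Every radius in \<open>K\<close> can be shrunk to a radius in the finite set \<open>D\<close> without losing points.\<close>
  have shrink: "\<exists>r'\<in>K \<inter> D. r' \<le> r" if rK: "r \<in> K" for r
  proof -
    define r' where "r' = Max {d\<in>D. d \<le> r}"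
    have fin2: "finite {d\<in>D. d \<le> r}" using finD by simp
    have "0 \<in> {d\<in>D. d \<le> r}" using rK by (simp add: D_def K_def)
    then have r'_in: "r' \<in> {d\<in>D. d \<le> r}" unfolding r'_def using fin2 by (intro Max_in) auto
    have "S \<inter> cball p r \<subseteq> S \<inter> cball p r'"
      unfolding r'_def using fin2 by (auto simp: D_def intro!: Max_ge)
    then have "card (S \<inter> cball p r) \<le> card (S \<inter> cball p r')"
      using fin by (intro card_mono) auto
    then have "i \<le> card (S \<inter> cball p r')" using rK by (simp add: K_def)
    then show ?thesis using r'_in by (auto simp: K_def D_def)
  qed
  have "Max D \<in> K \<inter> D"
  proof -
    have "S \<inter> cball p (Max D) = S" "0 \<le> Max D" using finD by (auto simp: D_def)
    moreover have "Max D \<in> D" using finD by (intro Max_in) (auto simp: D_def)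
    ultimately show ?thesis using iS by (simp add: K_def)
  qed
  then have mu_in: "Min (K \<inter> D) \<in> K \<inter> D" using finD by (intro Min_in) auto
  have "Inf K = Min (K \<inter> D)"
  proof (rule cInf_eq_minimum)
    fix r assume "r \<in> K"
    then obtain r' where "r' \<in> K \<inter> D" "r' \<le> r" using shrink by blast
    then show "Min (K \<inter> D) \<le> r" using finD by (meson Min_le finite_Int order_trans)
  qed (use mu_in in simp)
  then show ?thesis using mu_in by (simp add: kdist_def K_def)
qed

lemma card_cball_ge_of_kdist_le:
  fixes S :: "'a::metric_space set"
  assumes "finite S" "i \<le> card S" "kdist S p i \<le> r"
  shows "i \<le> card (S \<inter> cball p r)"
proof -
  have "S \<inter> cball p (kdist S p i) \<subseteq> S \<inter> cball p r" using assms(3) by auto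
  then show ?thesis
    using kdist_attained[OF assms(1,2)] assms(1) by (meson card_mono finite_Int order_trans)
qed

lemma kdist_le_dist_add:
  fixes S :: "'a::metric_space set"
  assumes "finite S" "N \<subseteq> S \<inter> cball c r" "i \<le> card N" "0 \<le> r" "dist p c \<le> s"
  shows "kdist S p i \<le> s + r"
proof (rule kdist_le)
  show "0 \<le> s + r" using assms(4,5) zero_le_dist[of p c] by linarith
  have "dist p t \<le> s + r" if "t \<in> N" for t
    using that assms(2,5) dist_triangle[of p t c] by auto
  then have "N \<subseteq> S \<inter> cball p (s + r)" using assms(2) by auto
  then show "i \<le> card (S \<inter> cball p (s + r))"
    using assms(1,3) by (meson card_mono finite_Int order_trans)
qed

lemma card_nn_set_ge:
  fixes S :: "'a::metric_space set"
  assumes fin: "finite S" and inj: "inj_on ix S" and iS: "i \<le> card S"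
  shows "i \<le> card (nn_set ix S p i)"
proof -
  define lt where "lt t s \<longleftrightarrow> dist p t < dist p s \<or> (dist p t = dist p s \<and> ix t < ix s)" for t s
  define rk where "rk s = card {t\<in>S. lt t s}" for s
  have rk_mono: "rk s < rk s'" if "s \<in> S" "lt s s'" for s s'
  proof -
    have "{t\<in>S. lt t s} \<subset> {t\<in>S. lt t s'}" using that by (auto simp: lt_def)
    then show ?thesis unfolding rk_def using fin by (intro psubset_card_mono) auto
  qed
  text \<open>Ties in distance are broken by the injective index, so the rank is injective.\<close>
  have inj_rk: "inj_on rk S"
  proof (rule inj_onI, rule ccontr)
    fix s s' assume "s \<in> S" "s' \<in> S" "rk s = rk s'" "s \<noteq> s'"
    then have "ix s \<noteq> ix s'" using inj by (auto dest: inj_onD)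
    then have "lt s s' \<or> lt s' s" by (auto simp: lt_def)
    then show False using rk_mono \<open>s \<in> S\<close> \<open>s' \<in> S\<close> \<open>rk s = rk s'\<close> by fastforce
  qed
  have "rk ` S \<subseteq> {0..<card S}"
  proof
    fix x assume "x \<in> rk ` S"
    then obtain s where s: "s \<in> S" "x = rk s" by auto
    have "{t\<in>S. lt t s} \<subset> S" using s by (auto simp: lt_def)
    then show "x \<in> {0..<card S}" unfolding s rk_def using fin by (simp add: psubset_card_mono)
  qed
  then have rk_onto: "rk ` S = {0..<card S}"
    by (intro card_subset_eq) (auto simp: card_image[OF inj_rk])
  have "{0..<i} \<subseteq> rk ` {s\<in>S. rk s < i}" using rk_onto iS by force
  then have "i \<le> card (rk ` {s\<in>S. rk s < i})"
    using card_mono[of "rk ` {s\<in>S. rk s < i}" "{0..<i}"] fin by simp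
  also have "\<dots> \<le> card {s\<in>S. rk s < i}" using fin by (intro card_image_le) simp
  finally show ?thesis by (simp add: nn_set_def rk_def lt_def)
qed

lemma nn_set_subset_cball:
  fixes S :: "'a::metric_space set"
  assumes "finite S" "T \<subseteq> S" "i \<le> card (T \<inter> cball p r)"
  shows "nn_set ix S p i \<subseteq> cball p r"
proof
  fix s assume s: "s \<in> nn_set ix S p i"
  show "s \<in> cball p r"
  proof (rule ccontr)
    let ?closer = "{t \<in> S. dist p t < dist p s \<or> (dist p t = dist p s \<and> ix t < ix s)}"
    assume "s \<notin> cball p r"
    then have "T \<inter> cball p r \<subseteq> ?closer" using assms(2) by auto
    then have "card (T \<inter> cball p r) \<le> card ?closer" using assms(1) by (intro card_mono) auto
    then show False using assms(3) s unfolding nn_set_def by simp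
  qed
qed

lemma card_mult_le_of_separated_balls:
  fixes x :: "'i \<Rightarrow> 'a::metric_space"
  assumes "finite S" "finite I"
    and ball: "\<And>i. i \<in> I \<Longrightarrow> l \<le> card (S \<inter> cball (x i) r)"
    and sep: "\<And>i j. i \<in> I \<Longrightarrow> j \<in> I \<Longrightarrow> i \<noteq> j \<Longrightarrow> 2 * r < dist (x i) (x j)"
  shows "card I * l \<le> card S"
proof -
  have disj: "(S \<inter> cball (x i) r) \<inter> (S \<inter> cball (x j) r) = {}"
    if "i \<in> I" "j \<in> I" "i \<noteq> j" for i j
  proof -
    have "dist (x i) (x j) \<le> 2 * r" if "dist (x i) s \<le> r" "dist (x j) s \<le> r" for s
      using that dist_triangle2[of "x i" "x j" s] by linarith
    then show ?thesis using sep[OF that] by fastforce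
  qed
  have "card I * l = (\<Sum>i\<in>I. l)" by simp
  also have "\<dots> \<le> (\<Sum>i\<in>I. card (S \<inter> cball (x i) r))" using ball by (intro sum_mono)
  also have "\<dots> = card (\<Union>i\<in>I. S \<inter> cball (x i) r)"
    using disj assms(1,2) by (intro card_UN_disjoint[symmetric]) auto
  also have "\<dots> \<le> card S" using assms(1) by (intro card_mono) auto
  finally show ?thesis .
qed

lemma gonzalez_center_in:
  "gonzalez P m q \<Longrightarrow> i \<in> {1..m} \<Longrightarrow> q i \<in> P"
  unfolding gonzalez_def by blast

lemma gonzalez_separated:
  assumes gz: "gonzalez P m q" and "p \<in> P" and far: "\<forall>i\<in>{1..m}. \<delta> < dist p (q i)"
    and "i \<in> {1..m}" "j \<in> {1..m}" "i < j"
  shows "\<delta> < dist (q i) (q j)"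
proof -
  let ?S = "q ` {1..<j}"
  have j: "j \<in> {2..m}" using assms(4-6) by auto
  then have "\<delta> < dist_set p ?S"
    unfolding dist_set_def using far by (subst Min_gr_iff) auto
  also have "\<dots> \<le> dist_set (q j) ?S" using gz j \<open>p \<in> P\<close> unfolding gonzalez_def by blast
  also have "\<dots> \<le> dist (q j) (q i)" unfolding dist_set_def using assms(4,6) by (intro Min_le) auto
  finally show ?thesis by (simp add: dist_commute)
qed

lemma gonzalez_covers:
  fixes S :: "'a::metric_space set"
  assumes gz: "gonzalez P m q" and "p \<in> P" and "finite S" and small: "card S < Suc m * l"
    and ball: "\<And>x. x \<in> P \<Longrightarrow> l \<le> card (S \<inter> cball x r)"
  shows "\<exists>i\<in>{1..m}. dist p (q i) \<le> 2 * r"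
proof (rule ccontr)
  assume "\<not> ?thesis"
  then have far: "\<forall>i\<in>{1..m}. 2 * r < dist p (q i)" by auto
  define x where "x i = (if i = 0 then p else q i)" for i
  have sep: "2 * r < dist (x i) (x j)" if "i \<in> {0..m}" "j \<in> {0..m}" "i < j" for i j
    using that far gonzalez_separated[OF gz \<open>p \<in> P\<close> far, of i j] by (auto simp: x_def)
  have "card {0..m} * l \<le> card S"
  proof (rule card_mult_le_of_separated_balls[OF \<open>finite S\<close>])
    show "l \<le> card (S \<inter> cball (x i) r)" if "i \<in> {0..m}" for i
      using that ball \<open>p \<in> P\<close> gonzalez_center_in[OF gz] by (simp add: x_def)
    show "2 * r < dist (x i) (x j)" if "i \<in> {0..m}" "j \<in> {0..m}" "i \<noteq> j" for i j
      using that sep[of i j] sep[of j i] by (cases "i < j") (auto simp: dist_commute)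
  qed simp
  then show False using small by simp
qed

lemma r_opt_attained:
  assumes "finite P" "k \<le> card P"
  obtains C' where "C' \<subseteq> P" "card C' = k" "r_opt P k l = ft_cost P C' l"
proof -
  let ?F = "{ft_cost P C' l | C'. C' \<subseteq> P \<and> card C' = k}"
  have "?F \<subseteq> (\<lambda>C'. ft_cost P C' l) ` Pow P" by auto
  then have "finite ?F" using assms(1) by (meson finite_Pow_iff finite_imageI finite_subset)
  moreover have "?F \<noteq> {}" using assms obtain_subset_with_card_n[of k P] by blast
  ultimately have "r_opt P k l \<in> ?F" unfolding r_opt_def by (rule Min_in)
  then show ?thesis using that by blast
qed

lemma kdist_le_ft_cost:
  "finite P \<Longrightarrow> p \<in> P \<Longrightarrow> kdist C p l \<le> ft_cost P C l"
  unfolding ft_cost_def by (intro Max_ge) auto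

lemma ft_cost_le:
  "finite P \<Longrightarrow> P \<noteq> {} \<Longrightarrow> (\<And>p. p \<in> P \<Longrightarrow> kdist C p l \<le> c) \<Longrightarrow> ft_cost P C l \<le> c"
  unfolding ft_cost_def by (subst Max_le_iff) auto

lemma r_opt_witness:
  fixes P :: "'a::metric_space set"
  assumes finP: "finite P" "P \<noteq> {}" and "l \<le> k" "k \<le> card P"
  obtains Cs where "Cs \<subseteq> P" "card Cs = k" "0 \<le> r_opt P k l"
    "\<And>x. x \<in> P \<Longrightarrow> l \<le> card (Cs \<inter> cball x (r_opt P k l))"
proof -
  obtain Cs where Cs: "Cs \<subseteq> P" "card Cs = k" and opt: "r_opt P k l = ft_cost P Cs l"
    using r_opt_attained[OF finP(1) assms(4)] by blast
  have finCs: "finite Cs" using Cs(1) finP(1) finite_subset by blast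
  have l_le: "l \<le> card Cs" using Cs(2) assms(3) by simp
  obtain p0 where "p0 \<in> P" using finP(2) by blast
  then have "0 \<le> r_opt P k l"
    using kdist_attained[OF finCs l_le] kdist_le_ft_cost[OF finP(1)] opt by (metis order_trans)
  moreover have "l \<le> card (Cs \<inter> cball x (r_opt P k l))" if "x \<in> P" for x
    using card_cball_ge_of_kdist_le[OF finCs l_le] kdist_le_ft_cost[OF finP(1) that] opt by simp
  ultimately show ?thesis using that Cs by blast
qed

theorem theorem3:
  fixes pt :: "nat \<Rightarrow> 'a::metric_space" and P C :: "'a set"
    and n k l :: nat and q :: "nat \<Rightarrow> 'a"
  assumes "inj_on pt {1..n}" and "P = pt ` {1..n}"
    and "1 \<le> l" and "l \<le> k" and "k \<le> n"
    and "gonzalez P (k div l) q"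
    and "C \<subseteq> P" and "card C = k"
    and "(\<Union>i\<in>{1..k div l}. nn_set (inv_into {1..n} pt) P (q i) l) \<subseteq> C"
  shows "ft_cost P C l \<le> 4 * r_opt P k l \<and>
         (l dvd k \<longrightarrow> ft_cost P C l \<le> 3 * r_opt P k l)"
proof -
  let ?ix = "inv_into {1..n} pt" and ?r = "r_opt P k l"
  have finP: "finite P" and cardP: "card P = n" and "P \<noteq> {}"
    using assms(1-5) by (auto simp: card_image)
  obtain Cs where Cs: "Cs \<subseteq> P" "card Cs = k" and r_nonneg: "0 \<le> ?r"
    and ball: "\<And>x. x \<in> P \<Longrightarrow> l \<le> card (Cs \<inter> cball x ?r)"
    using r_opt_witness[OF finP \<open>P \<noteq> {}\<close> assms(4)] assms(5) cardP by metis
  have small: "card Cs < Suc (k div l) * l" using Cs(2) assms(3) dividend_less_div_times[of l k] by simp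
  have inj_ix: "inj_on ?ix P" using assms(2) by (simp add: inj_on_inv_into)
  have "kdist C p l \<le> 2 * ?r + ?r" if pP: "p \<in> P" for p
  proof -
    obtain i where i: "i \<in> {1..k div l}" "dist p (q i) \<le> 2 * ?r"
      using gonzalez_covers[OF assms(6) pP finite_subset[OF Cs(1) finP] small ball] by blast
    have "nn_set ?ix P (q i) l \<subseteq> C \<inter> cball (q i) ?r"
      using assms(9) i(1) nn_set_subset_cball[OF finP Cs(1) ball] gonzalez_center_in[OF assms(6) i(1)]
      by blast
    from kdist_le_dist_add[OF finite_subset[OF assms(7) finP] this
        card_nn_set_ge[OF finP inj_ix] r_nonneg i(2)]
    show ?thesis using assms(4,5) cardP by simp
  qed
  then have "ft_cost P C l \<le> 3 * ?r" using ft_cost_le[OF finP \<open>P \<noteq> {}\<close>] by simp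
  then show ?thesis using r_nonneg by simp
qed

end
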